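(* Let $a\in\mathbb{R}^p$ with $\max_{i=1,\ldots,p}a_i>0$. Let $Z$ be a regularly varying random variable with index $\alpha$, with $b_n$ chosen so that $n\Pr(b_n^{-1}Z>x)\to x^{-\alpha}$ for $x>0$, and assume $n\Pr\{Z\le\exp(-kb_n)\}\to0$ for every $k>0$. Then $a\circ Z=t\{a\,t^{-1}(Z)\}\in RV_+^p(\alpha)$ and, when normalized by $\{b_n\}$, it has angular measure $H_{a\circ Z}(\cdot)=\|a^{(0)}\|^{\alpha}\delta_{a^{(0)}/\|a^{(0)}\|}(\cdot)$, where $a^{(0)}=\max(a,0)$ componentwise and $\delta$ is a Dirac mass.
   Context: $t(y)=\log\{1+\exp(y)\}$, $t^{-1}(x)=\log\{\exp(x)-1\}$, with $a\,t^{-1}(Z)$ the vector $(a_1t^{-1}(Z),\ldots,a_pt^{-1}(Z))$ and $t$ applied componentwise. $X\in RV_+^p(\alpha)$: $X$ takes values in $[0,\infty)^p$ and $n\Pr(b_n^{-1}X\in\cdot)\stackrel{v}{\to}\nu_X$ vaguely on $[0,\infty]^p\setminus\{0\}$ for a nonzero $\nu_X$. For a fixed norm $\|\cdot\|$ and $\mathbb{S}^+_{p-1}=\{x\in\mathbb{R}^p_+:\|x\|=1\}$, the angular measure $H_X$ satisfies $\nu_X\{x:\|x\|>r,\ x/\|x\|\in B\}=r^{-\alpha}H_X(B)$. *)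

theory Defs
  imports "HOL-Probability.Probability"
begin

definition tfun :: "real \<Rightarrow> real" where
  "tfun y = ln (1 + exp y)"

definition tinv :: "real \<Rightarrow> real" where
  "tinv x = ln (exp x - 1)"

definition circ_vec :: "real ^ 'p \<Rightarrow> real \<Rightarrow> real ^ 'p" where
  "circ_vec a z = (\<chi> i. tfun (a $ i * tinv z))"

definition is_norm :: "(real ^ 'p \<Rightarrow> real) \<Rightarrow> bool" where
  "is_norm N \<longleftrightarrow> (\<forall>x. 0 \<le> N x) \<and> (\<forall>x. N x = 0 \<longleftrightarrow> x = 0)
     \<and> (\<forall>c x. N (c *\<^sub>R x) = \<bar>c\<bar> * N x) \<and> (\<forall>x y. N (x + y) \<le> N x + N y)"

definition emb :: "real ^ 'p \<Rightarrow> ereal ^ 'p" where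
  "emb y = (\<chi> i. ereal (y $ i))"

definition cone :: "(ereal ^ 'p) set" where
  "cone = {x. \<forall>i. 0 \<le> x $ i}"

definition Espace :: "(ereal ^ 'p) set" where
  "Espace = cone - {0}"

text \<open>Test functions for vague convergence on E: nonnegative, continuous on [0,inf]^p,
  with compact support in E, i.e. vanishing on a neighbourhood of 0 in [0,inf]^p.
  (Borel measurability is imposed for convenience; it is no loss since both
  sides only see the values on the cone.)\<close>
definition testfun :: "(ereal ^ 'p \<Rightarrow> real) \<Rightarrow> bool" where
  "testfun f \<longleftrightarrow> (\<forall>x. 0 \<le> f x) \<and> continuous_on cone f \<and> f \<in> borel_measurable borel
     \<and> (\<exists>\<epsilon>>0. \<forall>x\<in>cone. (\<forall>i. x $ i < ereal \<epsilon>) \<longrightarrow> f x = 0)"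

text \<open>nu is a Radon measure on E (viewed as a Borel measure on [-inf,inf]^p vanishing off E).\<close>
definition radon_on_E :: "(ereal ^ 'p) measure \<Rightarrow> bool" where
  "radon_on_E \<nu> \<longleftrightarrow> sets \<nu> = sets borel \<and> emeasure \<nu> (UNIV - Espace) = 0
     \<and> (\<forall>\<epsilon>>0. emeasure \<nu> {x\<in>cone. \<exists>i. ereal \<epsilon> \<le> x $ i} < \<infinity>)"

definition vague_conv :: "'a measure \<Rightarrow> ('a \<Rightarrow> real ^ 'p) \<Rightarrow> (nat \<Rightarrow> real)
     \<Rightarrow> (ereal ^ 'p) measure \<Rightarrow> bool" where
  "vague_conv M X b \<nu> \<longleftrightarrow> (\<forall>f. testfun f \<longrightarrow>
     ((\<lambda>n. ennreal (real n) * (\<integral>\<^sup>+ \<omega>. ennreal (f (emb ((1 / b n) *\<^sub>R X \<omega>))) \<partial>M))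
        \<longlongrightarrow> (\<integral>\<^sup>+ x. ennreal (f x) \<partial>\<nu>)) sequentially)"

definition escale :: "real \<Rightarrow> ereal ^ 'p \<Rightarrow> ereal ^ 'p" where
  "escale c x = (\<chi> i. ereal c * x $ i)"

definition RV_plus :: "'a measure \<Rightarrow> ('a \<Rightarrow> real ^ 'p) \<Rightarrow> real \<Rightarrow> (nat \<Rightarrow> real)
     \<Rightarrow> (ereal ^ 'p) measure \<Rightarrow> bool" where
  "RV_plus M X \<alpha> b \<nu> \<longleftrightarrow>
     (\<forall>\<omega>\<in>space M. \<forall>i. 0 \<le> X \<omega> $ i) \<and> radon_on_E \<nu> \<and> vague_conv M X b \<nu>
     \<and> emeasure \<nu> (space \<nu>) \<noteq> 0
     \<and> (\<forall>c>0. \<forall>A\<in>sets borel. A \<subseteq> Espace \<longrightarrow>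
          emeasure \<nu> (escale c ` A) = ennreal (c powr (-\<alpha>)) * emeasure \<nu> A)"

definition polar_set :: "(real ^ 'p \<Rightarrow> real) \<Rightarrow> real \<Rightarrow> (real ^ 'p) set \<Rightarrow> (ereal ^ 'p) set" where
  "polar_set N r B = emb ` {y. (\<forall>i. 0 \<le> y $ i) \<and> N y > r \<and> (1 / N y) *\<^sub>R y \<in> B}"

definition sphere_plus :: "(real ^ 'p \<Rightarrow> real) \<Rightarrow> (real ^ 'p) set" where
  "sphere_plus N = {x. (\<forall>i. 0 \<le> x $ i) \<and> N x = 1}"

definition angular_measure :: "(real ^ 'p \<Rightarrow> real) \<Rightarrow> real \<Rightarrow> (ereal ^ 'p) measure
     \<Rightarrow> ((real ^ 'p) set \<Rightarrow> ennreal) \<Rightarrow> bool" where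
  "angular_measure N \<alpha> \<nu> H \<longleftrightarrow> (\<forall>r>0. \<forall>B\<in>sets borel. B \<subseteq> sphere_plus N \<longrightarrow>
     emeasure \<nu> (polar_set N r B) = ennreal (r powr (-\<alpha>)) * H B)"

end

theory Submission
  imports Defs
begin

text \<open>
  For large \<open>z\<close> one has \<open>t y = max y 0 + O(1)\<close> and \<open>t\<^sup>-\<^sup>1 z = z + O(1)\<close>, so on the event
  \<open>Z > c b\<^sub>n\<close> the vector \<open>(a \<circ> Z) / b\<^sub>n\<close> lies within \<open>O(1/b\<^sub>n)\<close> of \<open>(Z / b\<^sub>n) a\<^sup>+\<close>, where
  \<open>a\<^sup>+ = max a 0\<close> componentwise. On the event \<open>exp(-k b\<^sub>n) < Z \<le> c b\<^sub>n\<close> all its coordinates are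
  \<open>O(c + k)\<close>, so a test function vanishing near the origin vanishes there once \<open>c\<close> and \<open>k\<close> are
  small, while the event \<open>Z \<le> exp(-k b\<^sub>n)\<close> is negligible by hypothesis. Hence
  \<open>n E f((a \<circ> Z) / b\<^sub>n)\<close> behaves like \<open>n Pr(Z > c b\<^sub>n) E[f((Z / b\<^sub>n) a\<^sup>+) | Z > c b\<^sub>n]\<close>. The
  conditional law of \<open>Z / b\<^sub>n\<close> converges weakly to a Pareto law, and Skorohod's representation
  lets the integrand depend on \<open>n\<close>. The limit measure is carried by the ray through \<open>a\<^sup>+\<close>, with
  \<open>\<nu>{x a\<^sup>+ : x > r} = r\<^sup>-\<^sup>\<alpha>\<close>; its angular measure is the point mass at \<open>a\<^sup>+ / \<parallel>a\<^sup>+\<parallel>\<close> of weight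
  \<open>\<parallel>a\<^sup>+\<parallel>\<^sup>\<alpha>\<close>.
\<close>

section \<open>The softplus transform\<close>

lemma max_le_tfun: "max y 0 \<le> tfun y"
proof -
  have "exp y \<le> 1 + exp y" by simp
  hence "y \<le> ln (1 + exp y)"
    by (metis exp_gt_zero ln_exp ln_le_cancel_iff add_pos_pos zero_less_one)
  moreover have "0 \<le> ln (1 + exp y)" by (simp add: add_pos_pos)
  ultimately show ?thesis by (simp add: tfun_def)
qed

lemma tfun_pos: "0 < tfun y"
  unfolding tfun_def by (simp add: add_pos_pos)

lemma tfun_le_max_plus_ln2: "tfun y \<le> max y 0 + ln 2"
proof -
  have "1 + exp y \<le> 2 * exp (max y 0)"
    by (cases "y \<le> 0") (auto simp: max_def)
  hence "ln (1 + exp y) \<le> ln (2 * exp (max y 0))"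
    by (simp add: add_pos_pos)
  also have "\<dots> = ln 2 + max y 0" by (simp add: ln_mult)
  finally show ?thesis by (simp add: tfun_def)
qed

lemma tinv_less:
  assumes "z > 0"
  shows "tinv z < z"
proof -
  have "ln (exp z - 1) < ln (exp z)" using assms by (subst ln_less_cancel_iff) auto
  thus ?thesis by (simp add: tinv_def)
qed

lemma ln_le_tinv:
  assumes "z > 0"
  shows "ln z \<le> tinv z"
proof -
  have "z \<le> exp z - 1" using exp_ge_add_one_self[of z] by linarith
  thus ?thesis unfolding tinv_def using assms by simp
qed

lemma tinv_ge_diff_one:
  assumes "z \<ge> 1"
  shows "z - 1 \<le> tinv z"
proof -
  have "exp (z - 1) * 1 \<le> exp (z - 1) * (exp 1 - 1)"
    using exp_ge_add_one_self[of 1] by simp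
  also have "\<dots> = exp z - exp (z - 1)" by (simp add: algebra_simps flip: exp_add)
  finally have "2 * exp (z - 1) \<le> exp z" by simp
  moreover have "1 \<le> exp (z - 1)" using assms by simp
  ultimately have "exp (z - 1) \<le> exp z - 1" by linarith
  hence "ln (exp (z - 1)) \<le> ln (exp z - 1)" using assms by (subst ln_le_cancel_iff) auto
  thus ?thesis by (simp add: tinv_def)
qed

lemma abs_tfun_mult_tinv_le:
  assumes "z \<ge> 1"
  shows "\<bar>tfun (a * tinv z) - max a 0 * z\<bar> \<le> \<bar>a\<bar> + ln 2"
proof -
  have t: "z - 1 \<le> tinv z" "tinv z \<le> z" using tinv_ge_diff_one[OF assms] tinv_less[of z] assms by auto
  have l2: "0 \<le> ln (2::real)" by simp
  show ?thesis
  proof (cases "a \<ge> 0")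
    case True
    have "a * (z - 1) \<le> a * tinv z" "a * tinv z \<le> a * z"
      using t True by (auto intro: mult_left_mono)
    moreover have "max (a * tinv z) 0 \<le> a * z" "a * z - a \<le> max (a * tinv z) 0"
      using calculation True assms by (auto simp: algebra_simps)
    ultimately show ?thesis
      using max_le_tfun[of "a * tinv z"] tfun_le_max_plus_ln2[of "a * tinv z"] True l2
      unfolding abs_le_iff by (simp only: abs_of_nonneg max_absorb1) linarith
  next
    case False
    have "a * tinv z \<le> 0" using t False assms by (simp add: mult_nonpos_nonneg)
    then show ?thesis
      using max_le_tfun[of "a * tinv z"] tfun_le_max_plus_ln2[of "a * tinv z"] False l2
      by (auto simp: max_def)
  qed
qed

lemma tfun_mult_tinv_le:
  assumes "exp (- k * b) < z" "z \<le> c * b" "b > 0" "k > 0" "c > 0"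
  shows "tfun (a * tinv z) \<le> \<bar>a\<bar> * (c + k) * b + ln 2"
proof -
  have z: "z > 0" using assms(1) by (metis exp_gt_zero less_trans)
  have "ln z > - k * b" using assms(1) z by (metis ln_exp ln_less_cancel_iff exp_gt_zero)
  hence lo: "- k * b < tinv z" using ln_le_tinv[OF z] by simp
  have hi: "tinv z < c * b" using tinv_less[OF z] assms(2) by simp
  have "\<bar>tinv z\<bar> \<le> (c + k) * b"
  proof -
    have "0 < c * b" "0 < k * b" using assms(3-5) by simp_all
    thus ?thesis using lo hi by (simp add: abs_le_iff algebra_simps)
  qed
  hence "\<bar>a * tinv z\<bar> \<le> \<bar>a\<bar> * ((c + k) * b)"
    unfolding abs_mult by (intro mult_left_mono) auto
  hence "max (a * tinv z) 0 \<le> \<bar>a\<bar> * (c + k) * b"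
    using assms(3-5) by (simp add: mult.assoc)
  thus ?thesis using tfun_le_max_plus_ln2[of "a * tinv z"] by linarith
qed

lemma tfun_measurable[measurable]: "tfun \<in> borel_measurable borel"
  unfolding tfun_def by measurable

lemma tinv_measurable[measurable]: "tinv \<in> borel_measurable borel"
  unfolding tinv_def by measurable

section \<open>The compactified cone\<close>

lemma emb_inject: "emb x = emb y \<longleftrightarrow> x = y"
  by (auto simp: emb_def vec_eq_iff)

lemma emb_nth[simp]: "emb y $ i = ereal (y $ i)"
  by (simp add: emb_def)

lemma emb_eq_0_iff: "emb y = 0 \<longleftrightarrow> y = 0"
  by (auto simp: emb_def vec_eq_iff)

lemma tendsto_emb: "(f \<longlongrightarrow> l) F \<Longrightarrow> ((\<lambda>x. emb (f x)) \<longlongrightarrow> emb l) F"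
  unfolding emb_def by (auto intro!: tendsto_vec_lambda tendsto_vec_nth simp: lim_ereal)

lemma emb_measurable[measurable]: "emb \<in> borel_measurable borel"
  by (intro borel_measurable_continuous_onI continuous_on_def[THEN iffD2] ballI tendsto_emb
      tendsto_ident_at)

lemma vec_lambda_measurable:
  "(\<And>i. (\<lambda>x. f x i) \<in> borel_measurable M) \<Longrightarrow> (\<lambda>x. (\<chi> i. f x i) :: real^'p) \<in> borel_measurable M"
  by (subst borel_measurable_euclidean_space) (auto simp: Basis_vec_def inner_axis)

lemma vec_nth_ereal_measurable[measurable]: "(\<lambda>x :: ereal^'p. x $ i) \<in> borel_measurable borel"
  by (rule borel_measurable_continuous_onI) (auto simp: continuous_on_def intro!: tendsto_vec_nth)

lemma emb_image_borel:
  assumes S: "S \<in> sets (borel :: (real^'p) measure)"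
  shows "emb ` S \<in> sets (borel :: (ereal^'p) measure)"
proof -
  have eq: "emb ` S = {x. (\<forall>i. \<bar>x $ i\<bar> \<noteq> \<infinity>) \<and> (\<chi> i. real_of_ereal (x $ i)) \<in> S}"
  proof (intro equalityI subsetI)
    fix x assume "x \<in> emb ` S"
    then obtain y where "y \<in> S" "x = emb y" by auto
    moreover have "(\<chi> i. real_of_ereal (emb y $ i)) = y" by (simp add: vec_eq_iff)
    ultimately show "x \<in> {x. (\<forall>i. \<bar>x $ i\<bar> \<noteq> \<infinity>) \<and> (\<chi> i. real_of_ereal (x $ i)) \<in> S}" by simp
  next
    fix x assume x: "x \<in> {x. (\<forall>i. \<bar>x $ i\<bar> \<noteq> \<infinity>) \<and> (\<chi> i. real_of_ereal (x $ i)) \<in> S}"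
    have "x = emb (\<chi> i. real_of_ereal (x $ i))" using x by (simp add: vec_eq_iff emb_def ereal_real')
    thus "x \<in> emb ` S" using x by blast
  qed
  have "(\<lambda>x :: ereal^'p. (\<chi> i. real_of_ereal (x $ i)) :: real^'p) \<in> borel_measurable borel"
    by (rule vec_lambda_measurable) measurable
  from measurable_sets[OF this S]
  have "{x :: ereal^'p. (\<chi> i. real_of_ereal (x $ i)) \<in> S} \<in> sets borel" by (simp add: vimage_def)
  moreover have "{x :: ereal^'p. \<forall>i. \<bar>x $ i\<bar> \<noteq> \<infinity>} \<in> sets borel" by measurable
  ultimately show ?thesis unfolding eq by (simp add: Collect_conj_eq)
qed

lemma escale_emb: "escale c (emb y) = emb (c *\<^sub>R y)"
  by (simp add: escale_def emb_def)

lemma escale_inject: "c > 0 \<Longrightarrow> escale c x = escale c y \<longleftrightarrow> x = y"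
  by (auto simp: escale_def vec_eq_iff ereal_mult_cancel_left)

lemma escale_escale: "escale a (escale b x) = escale (a * b) x"
  by (simp add: escale_def vec_eq_iff mult.assoc[symmetric])

lemma escale_one[simp]: "escale 1 x = x"
  by (simp add: escale_def vec_eq_iff)

lemma escale_measurable: "c \<noteq> 0 \<Longrightarrow> escale c \<in> borel_measurable borel"
  unfolding escale_def
  by (intro borel_measurable_continuous_onI)
     (auto simp: continuous_on_def intro!: tendsto_vec_lambda tendsto_vec_nth tendsto_mult_ereal)

lemma escale_image_borel:
  assumes c: "c > 0" and A: "A \<in> sets borel"
  shows "escale c ` A \<in> sets borel"
proof -
  have "escale c ` A = escale (1/c) -` A"
  proof (intro equalityI subsetI)
    fix y assume "y \<in> escale (1/c) -` A"
    moreover have "y = escale c (escale (1/c) y)" using c by (simp add: escale_escale)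
    ultimately show "y \<in> escale c ` A" by (metis vimageD image_eqI)
  qed (use c in \<open>auto simp: escale_escale\<close>)
  thus ?thesis using measurable_sets[OF escale_measurable A, of "1/c"] c by simp
qed

lemma closed_cone: "closed (cone :: (ereal^'p) set)"
  using closed_vector_box[of "\<lambda>_. {0::ereal..}"] by (simp add: cone_def)

lemma cone_borel[measurable]: "(cone :: (ereal^'p) set) \<in> sets borel"
  by (rule borel_closed[OF closed_cone])

lemma Espace_borel[measurable]: "(Espace :: (ereal^'p) set) \<in> sets borel"
proof -
  have "{0::ereal^'p} = {x. \<forall>i. x $ i \<in> {0}}" by (auto simp: vec_eq_iff)
  hence "closed {0::ereal^'p}" using closed_vector_box[of "\<lambda>_. {0::ereal}"] by simp
  thus ?thesis unfolding Espace_def by (intro sets.Diff borel_closed closed_cone)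
qed

text \<open>\<open>[0,\<infinity>]\<^sup>p\<close> is compact as the image of the unit cube under the continuous
  coordinatewise surjection \<open>y \<mapsto> y / (1 - y)\<close> from \<open>[0,1]\<close> onto \<open>[0,\<infinity>]\<close>.\<close>

definition unit_to_ereal :: "real \<Rightarrow> ereal" where
  "unit_to_ereal y = (if y < 1 then ereal (y / (1 - y)) else \<infinity>)"

lemma continuous_on_unit_to_ereal: "continuous_on {0..1} unit_to_ereal"
  unfolding continuous_on_def
proof (intro ballI)
  fix y :: real assume y: "y \<in> {0..1}"
  show "(unit_to_ereal \<longlongrightarrow> unit_to_ereal y) (at y within {0..1})"
  proof (cases "y < 1")
    case True
    have "eventually (\<lambda>z. z < 1) (at y within {0..1})"
      using order_tendstoD(2)[OF tendsto_ident_at True] .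
    hence "eventually (\<lambda>z. ereal (z / (1 - z)) = unit_to_ereal z) (at y within {0..1})"
      by eventually_elim (simp add: unit_to_ereal_def)
    moreover have "((\<lambda>z. ereal (z / (1 - z))) \<longlongrightarrow> ereal (y / (1 - y))) (at y within {0..1})"
      using True by (auto simp: lim_ereal intro!: tendsto_intros)
    ultimately have "(unit_to_ereal \<longlongrightarrow> ereal (y / (1 - y))) (at y within {0..1})"
      by (rule tendsto_cong[THEN iffD1])
    thus ?thesis using True by (simp add: unit_to_ereal_def)
  next
    case False
    hence y1: "y = 1" using y by auto
    have "(unit_to_ereal \<longlongrightarrow> \<infinity>) (at 1 within {0..1})"
      unfolding tendsto_PInfty'[where c=0]
    proof (intro allI impI)
      fix r :: real assume r: "r > 0"
      have "r / (1 + r) < 1" using r by simp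
      hence "eventually (\<lambda>z. r / (1 + r) < z) (at 1 within {0..1})"
        using order_tendstoD(1)[OF tendsto_ident_at] by blast
      thus "eventually (\<lambda>z. ereal r < unit_to_ereal z) (at 1 within {0..1})"
      proof eventually_elim
        case (elim z)
        show ?case
        proof (cases "z < 1")
          case True
          have "r * (1 - z) < z" using elim r by (simp add: field_simps)
          hence "r < z / (1 - z)" using True by (simp add: field_simps)
          thus ?thesis using True by (simp add: unit_to_ereal_def)
        qed (simp add: unit_to_ereal_def)
      qed
    qed
    thus ?thesis using y1 by (simp add: unit_to_ereal_def)
  qed
qed

lemma unit_to_ereal_nonneg: "y \<in> {0..1} \<Longrightarrow> 0 \<le> unit_to_ereal y"
  by (auto simp: unit_to_ereal_def)

lemma unit_to_ereal_surj:
  assumes "0 \<le> x"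
  shows "\<exists>y\<in>{0..1}. unit_to_ereal y = x"
proof (cases x)
  case (real r)
  hence r: "r \<ge> 0" using assms by simp
  have "r / (1 + r) < 1" "(r / (1 + r)) / (1 - r / (1 + r)) = r"
    using r by (simp_all add: field_simps)
  hence "unit_to_ereal (r / (1 + r)) = x" using real by (simp add: unit_to_ereal_def)
  thus ?thesis using r by (intro bexI[of _ "r / (1 + r)"]) auto
next
  case PInf thus ?thesis by (intro bexI[of _ 1]) (auto simp: unit_to_ereal_def)
qed (use assms in simp)

lemma compact_cone: "compact (cone :: (ereal^'p) set)"
proof -
  let ?K = "cbox (0 :: real^'p) 1" and ?h = "\<lambda>y :: real^'p. \<chi> i. unit_to_ereal (y $ i)"
  have K: "?K = {y. \<forall>i. y $ i \<in> {0..1}}" by (auto simp: mem_box_cart)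
  have "continuous_on ?K ?h"
    unfolding continuous_on_def
  proof (intro ballI tendsto_vec_lambda)
    fix x :: "real^'p" and i assume x: "x \<in> ?K"
    show "((\<lambda>y. unit_to_ereal (y $ i)) \<longlongrightarrow> unit_to_ereal (x $ i)) (at x within ?K)"
    proof (rule continuous_on_tendsto_compose[OF continuous_on_unit_to_ereal])
      show "((\<lambda>y. y $ i) \<longlongrightarrow> x $ i) (at x within ?K)" by (intro tendsto_vec_nth tendsto_ident_at)
      show "x $ i \<in> {0..1}" using x K by auto
      show "eventually (\<lambda>y. y $ i \<in> {0..1}) (at x within ?K)"
        unfolding K eventually_at_filter by simp
    qed
  qed
  hence "compact (?h ` ?K)" by (intro compact_continuous_image) auto
  moreover have "?h ` ?K = cone"
  proof (intro equalityI subsetI)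
    fix x assume "x \<in> ?h ` ?K"
    thus "x \<in> cone" using K by (auto simp: cone_def unit_to_ereal_nonneg)
  next
    fix x :: "ereal^'p" assume "x \<in> cone"
    hence "\<forall>i. \<exists>y\<in>{0..1}. unit_to_ereal y = x $ i"
      using unit_to_ereal_surj by (auto simp: cone_def)
    then obtain g where g: "\<And>i. g i \<in> {0..1} \<and> unit_to_ereal (g i) = x $ i" by metis
    hence "?h (\<chi> i. g i) = x" "(\<chi> i. g i) \<in> ?K" using K by (auto simp: vec_eq_iff)
    thus "x \<in> ?h ` ?K" by blast
  qed
  ultimately show ?thesis by simp
qed

lemma testfun_bounded:
  assumes "testfun f"
  obtains B where "\<And>x. x \<in> cone \<Longrightarrow> f x \<le> B"
proof -
  have "compact (f ` cone)"
    using assms compact_cone by (intro compact_continuous_image) (auto simp: testfun_def)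
  then obtain B where "\<forall>y\<in>f ` cone. \<bar>y\<bar> \<le> B" by (auto dest!: compact_imp_bounded simp: bounded_real)
  thus ?thesis using that abs_le_D1 by blast
qed

section \<open>Norms\<close>

lemma is_norm_sum_le:
  assumes "is_norm N" "finite I"
  shows "N (sum f I) \<le> (\<Sum>i\<in>I. N (f i))"
  using assms(2)
proof induct
  case empty
  have "N 0 = 0" using assms(1) by (simp add: is_norm_def)
  thus ?case by simp
next
  case (insert i I)
  thus ?case using assms(1) unfolding is_norm_def
    by (simp add: sum.insert) (metis add_left_mono order_trans)
qed

lemma is_norm_le_const_mult_norm:
  assumes N: "is_norm N"
  obtains C where "C \<ge> 0" "\<And>x. N x \<le> C * norm x"
proof
  show "(\<Sum>i\<in>UNIV. N (axis i 1)) \<ge> 0" using N by (intro sum_nonneg) (auto simp: is_norm_def)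
  fix x :: "real^'a"
  have "N x = N (\<Sum>i\<in>UNIV. x $ i *\<^sub>R axis i 1)"
    using basis_expansion[of x] by (simp add: scalar_mult_eq_scaleR)
  also have "\<dots> \<le> (\<Sum>i\<in>UNIV. N (x $ i *\<^sub>R axis i 1))" by (rule is_norm_sum_le[OF N]) simp
  also have "\<dots> = (\<Sum>i\<in>UNIV. \<bar>x $ i\<bar> * N (axis i 1))" using N by (simp add: is_norm_def)
  also have "\<dots> \<le> (\<Sum>i\<in>UNIV. norm x * N (axis i 1))"
    using N by (intro sum_mono mult_right_mono) (auto simp: is_norm_def component_le_norm_cart)
  finally show "N x \<le> (\<Sum>i\<in>UNIV. N (axis i 1)) * norm x" by (simp add: sum_distrib_left mult.commute)
qed

lemma is_norm_continuous:
  assumes N: "is_norm N"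
  shows "continuous_on UNIV (N :: real^'a \<Rightarrow> real)"
proof -
  obtain C where "C \<ge> 0" and C: "\<And>x. N x \<le> C * norm x"
    using is_norm_le_const_mult_norm[OF N] by blast
  have tri: "N x \<le> N y + N (x - y)" for x y
    using N unfolding is_norm_def by (metis add.commute diff_add_cancel)
  have sym: "N (x - y) = N (y - x)" for x y
  proof -
    from N have "N ((-1) *\<^sub>R (x - y)) = \<bar>-1\<bar> * N (x - y)" unfolding is_norm_def by blast
    thus ?thesis by simp
  qed
  have "\<bar>N x - N y\<bar> \<le> C * norm (x - y)" for x y
    using tri[of x y] tri[of y x] sym[of x y] C[of "x - y"] C[of "y - x"]
    by (simp add: abs_le_iff norm_minus_commute)
  hence "C-lipschitz_on UNIV N" using \<open>C \<ge> 0\<close> by (intro lipschitz_onI) (auto simp: dist_norm)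
  thus ?thesis by (rule lipschitz_on_continuous_on)
qed

lemma is_norm_measurable: "is_norm N \<Longrightarrow> N \<in> borel_measurable borel"
  by (rule borel_measurable_continuous_onI[OF is_norm_continuous])

lemma polar_set_borel:
  assumes N: "is_norm N" and [measurable]: "B \<in> sets borel"
  shows "polar_set N r B \<in> sets borel"
proof -
  have [measurable]: "N \<in> borel_measurable borel" using is_norm_measurable[OF N] .
  have "{y :: real^'a. (\<forall>i. 0 \<le> y $ i) \<and> N y > r \<and> (1 / N y) *\<^sub>R y \<in> B} \<in> sets borel"
    by measurable
  thus ?thesis unfolding polar_set_def by (rule emb_image_borel)
qed

section \<open>The limit measure: Lebesgue measure transported to a ray\<close>

lemma less_powr_inverse_iff:
  fixes s q \<alpha> :: real
  assumes "s > 0" "q > 0" "\<alpha> > 0"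
  shows "q < s powr (-1/\<alpha>) \<longleftrightarrow> s < q powr (-\<alpha>)"
proof
  assume "q < s powr (-1/\<alpha>)"
  hence "(s powr (-1/\<alpha>)) powr (-\<alpha>) < q powr (-\<alpha>)"
    by (intro powr_less_mono2_neg) (use assms in auto)
  thus "s < q powr (-\<alpha>)" using assms by (simp add: powr_powr)
next
  assume "s < q powr (-\<alpha>)"
  hence "(q powr (-\<alpha>)) powr (-1/\<alpha>) < s powr (-1/\<alpha>)"
    by (intro powr_less_mono2_neg) (use assms in auto)
  thus "q < s powr (-1/\<alpha>)" using assms by (simp add: powr_powr)
qed

lemma le_powr_inverse_iff:
  fixes s q \<alpha> :: real
  assumes "s > 0" "q > 0" "\<alpha> > 0"
  shows "q \<le> s powr (-1/\<alpha>) \<longleftrightarrow> s \<le> q powr (-\<alpha>)"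
  using less_powr_inverse_iff[of "q powr (-\<alpha>)" "s powr (-1/\<alpha>)" \<alpha>] assms
  by (auto simp: powr_powr not_less[symmetric])

lemma emeasure_lborel_scale:
  fixes d :: real
  assumes d: "d > 0" and [measurable]: "S \<in> sets borel"
  shows "emeasure lborel S = ennreal d * emeasure lborel {s. d * s \<in> S}"
proof -
  have "emeasure lborel S = (\<integral>\<^sup>+ s. indicator S s \<partial>lborel)" by simp
  also have "\<dots> = ennreal \<bar>d\<bar> * (\<integral>\<^sup>+ s. indicator S (0 + d * s) \<partial>lborel)"
    by (rule nn_integral_real_affine) (use d in auto)
  also have "(\<lambda>s. indicator S (0 + d * s) :: ennreal) = indicator {s. d * s \<in> S}"
    by (auto simp: indicator_def)
  finally show ?thesis using d by simp
qed

text \<open>\<open>ray_measure \<alpha> v\<close> gives mass \<open>r\<^sup>-\<^sup>\<alpha>\<close> to \<open>{x v : x > r}\<close>, since \<open>s\<^sup>-\<^sup>1\<^sup>/\<^sup>\<alpha> > r\<close> iff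
  \<open>s < r\<^sup>-\<^sup>\<alpha>\<close>.\<close>

definition ray :: "real \<Rightarrow> real ^ 'p \<Rightarrow> real \<Rightarrow> ereal ^ 'p" where
  "ray \<alpha> v s = emb ((s powr (-1/\<alpha>)) *\<^sub>R v)"

definition ray_measure :: "real \<Rightarrow> real ^ 'p \<Rightarrow> (ereal ^ 'p) measure" where
  "ray_measure \<alpha> v = distr (restrict_space lborel {0<..}) borel (ray \<alpha> v)"

lemma ray_powr_mult:
  assumes "\<alpha> > 0" "c > 0" "u > 0"
  shows "ray \<alpha> v (c powr (-\<alpha>) * u) = emb ((c * u powr (-1/\<alpha>)) *\<^sub>R v)"
  using assms by (simp add: ray_def powr_mult powr_powr)

lemma ray_measurable[measurable]: "ray \<alpha> v \<in> borel_measurable borel"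
  unfolding ray_def by measurable

lemma ray_measurable_restrict: "ray \<alpha> v \<in> measurable (restrict_space lborel {0<..}) borel"
  by (rule measurable_restrict_space1) simp

lemma sets_ray_measure[simp]: "sets (ray_measure \<alpha> v) = sets borel"
  by (simp add: ray_measure_def)

lemma space_ray_measure[simp]: "space (ray_measure \<alpha> v) = UNIV"
  by (simp add: ray_measure_def)

lemma emeasure_ray_measure:
  assumes "A \<in> sets borel"
  shows "emeasure (ray_measure \<alpha> v) A = emeasure lborel {s\<in>{0<..}. ray \<alpha> v s \<in> A}"
proof -
  have "emeasure (ray_measure \<alpha> v) A
      = emeasure (restrict_space lborel {0<..}) (ray \<alpha> v -` A \<inter> {0<..})"
    unfolding ray_measure_def using assms
    by (subst emeasure_distr[OF ray_measurable_restrict]) (auto simp: space_restrict_space)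
  also have "\<dots> = emeasure lborel (ray \<alpha> v -` A \<inter> {0<..})"
    by (rule emeasure_restrict_space) auto
  also have "ray \<alpha> v -` A \<inter> {0<..} = {s\<in>{0<..}. ray \<alpha> v s \<in> A}" by auto
  finally show ?thesis .
qed

lemma nn_integral_ray_measure:
  assumes [measurable]: "f \<in> borel_measurable borel"
  shows "(\<integral>\<^sup>+ x. f x \<partial>ray_measure \<alpha> v) = (\<integral>\<^sup>+ s. f (ray \<alpha> v s) * indicator {0<..} s \<partial>lborel)"
  unfolding ray_measure_def
  by (subst nn_integral_distr[OF ray_measurable_restrict]) (auto simp: nn_integral_restrict_space)

context
  fixes \<alpha> :: real and v :: "real ^ 'p"
  assumes \<alpha>: "\<alpha> > 0" and v_nonneg: "\<forall>i. 0 \<le> v $ i" and v_nonzero: "v \<noteq> 0"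
begin

lemma ray_measure_radon: "radon_on_E (ray_measure \<alpha> v)"
  unfolding radon_on_E_def
proof (intro conjI allI impI)
  show "sets (ray_measure \<alpha> v) = sets borel" by simp
  have "{s\<in>{0<..}. ray \<alpha> v s \<in> UNIV - Espace} = {}"
    using v_nonneg v_nonzero by (auto simp: ray_def Espace_def cone_def emb_eq_0_iff)
  moreover have "UNIV - Espace \<in> sets (borel :: (ereal^'p) measure)" by simp
  ultimately show "emeasure (ray_measure \<alpha> v) (UNIV - Espace) = 0"
    by (simp only: emeasure_ray_measure) simp
next
  fix \<epsilon> :: real assume \<epsilon>: "\<epsilon> > 0"
  define m where "m = (\<Sum>i\<in>UNIV. v $ i)"
  have v_le: "v $ i \<le> m" for i unfolding m_def using v_nonneg by (intro member_le_sum) auto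
  obtain i where "v $ i \<noteq> 0" using v_nonzero by (auto simp: vec_eq_iff)
  hence m: "m > 0" using v_nonneg v_le[of i] by (metis order.not_eq_order_implies_strict order.strict_trans2)
  let ?A = "{x\<in>(cone :: (ereal^'p) set). \<exists>i. ereal \<epsilon> \<le> x $ i}"
  have "?A = cone \<inter> (\<Union>i. {x. x $ i \<in> {ereal \<epsilon>..}})" by auto
  hence A: "?A \<in> sets borel" by (auto intro!: sets.Int sets.finite_UN)
  have "{s\<in>{0<..}. ray \<alpha> v s \<in> ?A} \<subseteq> {0<..(\<epsilon>/m) powr (-\<alpha>)}"
  proof (rule subsetI)
    fix s :: real assume "s \<in> {s\<in>{0<..}. ray \<alpha> v s \<in> ?A}"
    then obtain i where s: "s > 0" and i: "\<epsilon> \<le> s powr (-1/\<alpha>) * v $ i" by (auto simp: ray_def)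
    hence "\<epsilon> \<le> s powr (-1/\<alpha>) * m"
      using v_le[of i] by (meson order_trans mult_left_mono powr_ge_zero)
    hence "\<epsilon> / m \<le> s powr (-1/\<alpha>)" using m by (simp add: divide_le_eq)
    thus "s \<in> {0<..(\<epsilon>/m) powr (-\<alpha>)}" using le_powr_inverse_iff[of s "\<epsilon>/m" \<alpha>] s \<epsilon> m \<alpha> by auto
  qed
  hence "emeasure lborel {s\<in>{0<..}. ray \<alpha> v s \<in> ?A} \<le> emeasure lborel {0<..(\<epsilon>/m) powr (-\<alpha>)}"
    by (rule emeasure_mono) simp
  thus "emeasure (ray_measure \<alpha> v) ?A < \<infinity>"
    by (simp add: emeasure_ray_measure[OF A] order.strict_trans1)
qed

lemma ray_measure_nonzero: "emeasure (ray_measure \<alpha> v) (space (ray_measure \<alpha> v)) \<noteq> 0"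
proof -
  have "emeasure (ray_measure \<alpha> v) (space (ray_measure \<alpha> v)) = emeasure lborel {0::real<..}"
    by (simp add: emeasure_ray_measure greaterThan_def)
  also have "\<dots> \<ge> emeasure lborel {0::real<..<1}" by (rule emeasure_mono) auto
  finally show ?thesis by (auto simp: le_zero_eq)
qed

lemma escale_ray:
  assumes c: "c > 0" and s: "s > 0"
  shows "escale c (ray \<alpha> v (c powr \<alpha> * s)) = ray \<alpha> v s"
proof -
  have "(c powr \<alpha> * s) powr (-1/\<alpha>) = c powr (\<alpha> * (-1/\<alpha>)) * s powr (-1/\<alpha>)"
    using c s by (simp add: powr_mult powr_powr)
  also have "c powr (\<alpha> * (-1/\<alpha>)) = 1 / c" using \<alpha> c by (simp add: powr_minus_divide)
  finally show ?thesis using c by (simp add: ray_def escale_emb)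
qed

lemma ray_measure_homogeneous:
  assumes c: "c > 0" and A[measurable]: "A \<in> sets borel"
  shows "emeasure (ray_measure \<alpha> v) (escale c ` A) = ennreal (c powr (-\<alpha>)) * emeasure (ray_measure \<alpha> v) A"
proof -
  define d where "d = c powr \<alpha>"
  have d: "d > 0" using c by (simp add: d_def)
  have "{s\<in>{0<..}. ray \<alpha> v s \<in> escale c ` A} = {s. d * s \<in> {s\<in>{0<..}. ray \<alpha> v s \<in> A}}"
  proof safe
    fix s :: real and x assume s: "s > 0" and x: "x \<in> A" and "ray \<alpha> v s = escale c x"
    hence "escale c x = escale c (ray \<alpha> v (d * s))" using escale_ray[OF c s] by (simp add: d_def)
    thus "ray \<alpha> v (d * s) \<in> A" using x escale_inject[OF c] by metis
  next
    fix s :: real assume "0 < d * s" "ray \<alpha> v (d * s) \<in> A"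
    thus "ray \<alpha> v s \<in> escale c ` A" using escale_ray[OF c, of s] d
      by (metis d_def image_eqI zero_less_mult_pos)
  qed (use d in \<open>auto simp: zero_less_mult_iff\<close>)
  hence "emeasure (ray_measure \<alpha> v) (escale c ` A)
      = emeasure lborel {s. d * s \<in> {s\<in>{0<..}. ray \<alpha> v s \<in> A}}"
    by (simp add: emeasure_ray_measure escale_image_borel[OF c A])
  also have "\<dots> = ennreal (c powr (-\<alpha>)) * (ennreal d * \<dots>)"
    using c by (simp add: d_def mult.assoc[symmetric] ennreal_mult'[symmetric] powr_minus field_simps)
  also have "ennreal d * emeasure lborel {s. d * s \<in> {s\<in>{0<..}. ray \<alpha> v s \<in> A}}
      = emeasure (ray_measure \<alpha> v) A"
    unfolding emeasure_ray_measure[OF A] by (rule emeasure_lborel_scale[OF d, symmetric]) measurable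
  finally show ?thesis .
qed

lemma ray_measure_angular:
  assumes N: "is_norm N"
  shows "angular_measure N \<alpha> (ray_measure \<alpha> v)
           (\<lambda>B. ennreal (N v powr \<alpha>) * indicator B ((1 / N v) *\<^sub>R v))"
  unfolding angular_measure_def
proof (intro allI impI ballI)
  fix r :: real and B :: "(real^'p) set" assume r: "r > 0" and B: "B \<in> sets borel"
  have Nv: "N v > 0" using N v_nonzero unfolding is_norm_def by (metis less_eq_real_def)
  define w where "w = (1 / N v) *\<^sub>R v"
  have N_scale: "N (t *\<^sub>R v) = t * N v" if "t > 0" for t using N that by (simp add: is_norm_def)
  have ray_in_polar: "ray \<alpha> v s \<in> polar_set N r B \<longleftrightarrow> s < (r / N v) powr (-\<alpha>) \<and> w \<in> B"
    if s: "s > 0" for s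
  proof -
    define t where "t = s powr (-1/\<alpha>)"
    have t: "t > 0" using s by (simp add: t_def)
    have "(1 / N (t *\<^sub>R v)) *\<^sub>R (t *\<^sub>R v) = w" using t Nv by (simp add: N_scale w_def)
    moreover have "N (t *\<^sub>R v) > r \<longleftrightarrow> r / N v < t" using t Nv by (simp add: N_scale divide_less_eq)
    ultimately have "ray \<alpha> v s \<in> polar_set N r B \<longleftrightarrow> r / N v < t \<and> w \<in> B"
      using t v_nonneg unfolding polar_set_def ray_def t_def[symmetric] by (auto simp: emb_inject)
    thus ?thesis using less_powr_inverse_iff[of s "r / N v" \<alpha>] s r Nv \<alpha> by (simp add: t_def)
  qed
  have "{s\<in>{0<..}. ray \<alpha> v s \<in> polar_set N r B}
      = (if w \<in> B then {0<..<(r / N v) powr (-\<alpha>)} else {})"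
    using ray_in_polar by auto
  hence "emeasure (ray_measure \<alpha> v) (polar_set N r B)
      = (if w \<in> B then ennreal ((r / N v) powr (-\<alpha>)) else 0)"
    by (simp add: emeasure_ray_measure[OF polar_set_borel[OF N B]])
  also have "\<dots> = ennreal (r powr (-\<alpha>)) * (ennreal (N v powr \<alpha>) * indicator B w)"
  proof -
    have "(r / N v) powr (-\<alpha>) = r powr (-\<alpha>) * N v powr \<alpha>"
      using r Nv by (simp add: powr_divide powr_minus field_simps)
    thus ?thesis using r Nv by (simp add: ennreal_mult' indicator_def)
  qed
  finally show "emeasure (ray_measure \<alpha> v) (polar_set N r B)
      = ennreal (r powr - \<alpha>) * (ennreal (N v powr \<alpha>) * indicator B ((1 / N v) *\<^sub>R v))"
    by (simp add: w_def)
qed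

end

section \<open>Pareto laws and conditional tail laws\<close>

definition pareto :: "real \<Rightarrow> real \<Rightarrow> real measure" where
  "pareto \<alpha> c = distr (restrict_space lborel {0<..1}) borel (\<lambda>u. c * u powr (-1/\<alpha>))"

lemma pareto_map_measurable:
  fixes c \<alpha> :: real
  shows "(\<lambda>u. c * u powr (-1/\<alpha>)) \<in> measurable (restrict_space lborel {0<..1}) borel"
  by (rule measurable_restrict_space1) measurable

lemma prob_space_unit_interval: "prob_space (restrict_space lborel {0<..(1::real)})"
  by (auto simp: space_restrict_space emeasure_restrict_space intro!: prob_spaceI)

lemma real_distribution_pareto: "real_distribution (pareto \<alpha> c)"
proof -
  interpret U: prob_space "restrict_space lborel {0<..(1::real)}" by (rule prob_space_unit_interval)
  have "prob_space (pareto \<alpha> c)" unfolding pareto_def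
    by (rule U.prob_space_distr[OF pareto_map_measurable])
  thus ?thesis unfolding real_distribution_def real_distribution_axioms_def
    by (simp add: pareto_def)
qed

lemma cdf_pareto:
  assumes c: "c > 0" and \<alpha>: "\<alpha> > 0"
  shows "cdf (pareto \<alpha> c) x = (if x \<le> c then 0 else 1 - (x / c) powr (-\<alpha>))"
proof -
  have "cdf (pareto \<alpha> c) x = measure (restrict_space lborel {0<..1}) ((\<lambda>u. c * u powr (-1/\<alpha>)) -` {..x} \<inter> {0<..1})"
    unfolding cdf_def pareto_def
    by (subst measure_distr[OF pareto_map_measurable]) (auto simp: space_restrict_space)
  also have "\<dots> = measure lborel ((\<lambda>u. c * u powr (-1/\<alpha>)) -` {..x} \<inter> {0<..1})"
    by (rule measure_restrict_space) auto
  also have "\<dots> = (if x \<le> c then 0 else 1 - (x / c) powr (-\<alpha>))"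
  proof (cases "x > 0")
    case False
    have "(\<lambda>u. c * u powr (-1/\<alpha>)) -` {..x} \<inter> {0<..1} = {}"
    proof -
      have "c * u powr (-1/\<alpha>) > x" if "u > 0" for u
      proof -
        have "c * u powr (-1/\<alpha>) > 0" using that c by simp
        thus ?thesis using False by linarith
      qed
      thus ?thesis by force
    qed
    thus ?thesis using False c by simp
  next
    case True
    define l where "l = (x / c) powr (-\<alpha>)"
    have l: "l > 0" using True c by (simp add: l_def)
    have "(\<lambda>u. c * u powr (-1/\<alpha>)) -` {..x} \<inter> {0<..1} = {l..1}"
    proof -
      have "c * u powr (-1/\<alpha>) \<le> x \<longleftrightarrow> l \<le> u" if u: "u > 0" for u
      proof -
        have "c * u powr (-1/\<alpha>) \<le> x \<longleftrightarrow> \<not> (x / c < u powr (-1/\<alpha>))"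
          using c by (simp add: divide_less_eq not_less mult.commute)
        also have "\<dots> \<longleftrightarrow> \<not> (u < l)" unfolding l_def
          using less_powr_inverse_iff[of u "x / c" \<alpha>] u True c \<alpha> by simp
        finally show ?thesis by linarith
      qed
      thus ?thesis using l by (auto; force)
    qed
    moreover have "l \<le> 1 \<longleftrightarrow> c \<le> x"
    proof -
      have "l \<le> 1 \<longleftrightarrow> \<not> (1 < l)" by linarith
      also have "1 < l \<longleftrightarrow> x / c < 1"
        unfolding l_def using less_powr_inverse_iff[of 1 "x / c" \<alpha>] True c \<alpha> by simp
      finally show ?thesis using c by (simp add: divide_less_eq not_less)
    qed
    ultimately show ?thesis
      by (cases "x \<le> c"; cases "x = c") (auto simp: l_def)
  qed
  finally show ?thesis .
qed

lemma AE_pareto_pos: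
  assumes "c > 0"
  shows "AE y in pareto \<alpha> c. y > 0"
proof -
  have "AE u in restrict_space lborel {0<..(1::real)}. c * u powr (-1/\<alpha>) > 0"
    by (rule AE_I2) (use assms in \<open>auto simp: space_restrict_space\<close>)
  thus ?thesis unfolding pareto_def by (subst AE_distr_iff[OF pareto_map_measurable]) auto
qed

lemma integral_tendsto_of_weak_conv:
  fixes \<mu> :: "nat \<Rightarrow> real measure" and P :: "real measure" and h :: "nat \<Rightarrow> real \<Rightarrow> real"
  assumes \<mu>: "\<And>n. real_distribution (\<mu> n)" and P: "real_distribution P" and wc: "weak_conv_m \<mu> P"
    and hmeas: "\<And>n. h n \<in> borel_measurable borel" and gmeas: "g \<in> borel_measurable borel"
    and hbd: "\<And>n y. \<bar>h n y\<bar> \<le> B"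
    and AEpos: "AE y in P. y > 0"
    and conv: "\<And>yn y. y > 0 \<Longrightarrow> (yn \<longlonglongrightarrow> y) \<Longrightarrow> ((\<lambda>n. h n (yn n)) \<longlonglongrightarrow> g y)"
  shows "(\<lambda>n. integral\<^sup>L (\<mu> n) (h n)) \<longlonglongrightarrow> integral\<^sup>L P g"
proof -
  obtain \<Omega> :: "real measure" and Ys :: "nat \<Rightarrow> real \<Rightarrow> real" and Y :: "real \<Rightarrow> real" where
    \<Omega>: "prob_space \<Omega>" and Ysm: "\<And>n. Ys n \<in> measurable \<Omega> borel"
    and Ysd: "\<And>n. distr \<Omega> borel (Ys n) = \<mu> n" and Ym: "Y \<in> measurable \<Omega> lborel"
    and Yd: "distr \<Omega> borel Y = P" and Yconv: "\<And>x. x \<in> space \<Omega> \<Longrightarrow> (\<lambda>n. Ys n x) \<longlonglongrightarrow> Y x"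
    using Skorohod[OF \<mu> P wc] by blast
  interpret \<Omega>: prob_space \<Omega> by (rule \<Omega>)
  have Ym': "Y \<in> measurable \<Omega> borel" using Ym by simp
  have e1: "integral\<^sup>L (\<mu> n) (h n) = integral\<^sup>L \<Omega> (\<lambda>x. h n (Ys n x))" for n
    using integral_distr[OF Ysm hmeas, of n n] Ysd[of n] by simp
  have e2: "integral\<^sup>L P g = integral\<^sup>L \<Omega> (\<lambda>x. g (Y x))"
    using integral_distr[OF Ym' gmeas] Yd by simp
  have AEY: "AE x in \<Omega>. Y x > 0"
  proof -
    have "AE y in distr \<Omega> borel Y. y > 0" unfolding Yd by (rule AEpos)
    thus ?thesis by (rule AE_distrD[OF Ym'])
  qed
  have "(\<lambda>n. integral\<^sup>L \<Omega> (\<lambda>x. h n (Ys n x))) \<longlonglongrightarrow> integral\<^sup>L \<Omega> (\<lambda>x. g (Y x))"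
  proof (rule integral_dominated_convergence[where w="\<lambda>_. B"])
    show "(\<lambda>x. g (Y x)) \<in> borel_measurable \<Omega>" using gmeas Ym' by measurable
    show "(\<lambda>x. h n (Ys n x)) \<in> borel_measurable \<Omega>" for n using hmeas Ysm by measurable
    show "integrable \<Omega> (\<lambda>_. B)" by simp
    show "AE x in \<Omega>. (\<lambda>n. h n (Ys n x)) \<longlonglongrightarrow> g (Y x)"
      using AEY
    proof (rule AE_mp)
      show "AE x in \<Omega>. 0 < Y x \<longrightarrow> (\<lambda>n. h n (Ys n x)) \<longlonglongrightarrow> g (Y x)"
        by (rule AE_I2) (auto intro!: conv Yconv)
    qed
    show "AE x in \<Omega>. norm (h n (Ys n x)) \<le> B" for n using hbd by simp
  qed
  thus ?thesis using e1 e2 by simp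
qed

text \<open>The conditional law of \<open>X\<close> given \<open>X > c\<close>; when this event is null the
  (irrelevant) value \<open>pareto \<alpha> c\<close> keeps it a probability distribution.\<close>

definition tail_law :: "'a measure \<Rightarrow> ('a \<Rightarrow> real) \<Rightarrow> real \<Rightarrow> real \<Rightarrow> real measure" where
  "tail_law M X \<alpha> c = (if measure M {\<omega>\<in>space M. X \<omega> > c} > 0
     then uniform_measure (distr M borel X) {c<..} else pareto \<alpha> c)"

context
  fixes M :: "'a measure" and X :: "'a \<Rightarrow> real" and c :: real
  assumes P: "prob_space M" and X[measurable]: "X \<in> borel_measurable M"
begin

interpretation prob_space M by (rule P)

lemma emeasure_tail_event: "emeasure (distr M borel X) {c<..} = ennreal (measure M {\<omega>\<in>space M. X \<omega> > c})"
proof -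
  have "emeasure (distr M borel X) {c<..} = emeasure M (X -` {c<..} \<inter> space M)"
    by (rule emeasure_distr) auto
  also have "X -` {c<..} \<inter> space M = {\<omega>\<in>space M. X \<omega> > c}" by auto
  finally show ?thesis by (simp add: emeasure_eq_measure)
qed

lemma real_distribution_tail_law: "real_distribution (tail_law M X \<alpha> c)"
proof (cases "measure M {\<omega>\<in>space M. X \<omega> > c} > 0")
  case True
  have "prob_space (uniform_measure (distr M borel X) {c<..})"
    by (rule prob_space_uniform_measure) (use True in \<open>simp_all add: emeasure_tail_event\<close>)
  thus ?thesis using True unfolding tail_law_def real_distribution_def real_distribution_axioms_def by simp
next
  case False
  thus ?thesis using real_distribution_pareto unfolding tail_law_def by simp
qed

lemma cdf_tail_law:
  assumes p: "measure M {\<omega>\<in>space M. X \<omega> > c} > 0"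
  shows "cdf (tail_law M X \<alpha> c) x = (if x \<le> c then 0 else
           1 - measure M {\<omega>\<in>space M. X \<omega> > x} / measure M {\<omega>\<in>space M. X \<omega> > c})"
proof -
  let ?D = "distr M borel X"
  let ?p = "measure M {\<omega>\<in>space M. X \<omega> > c}"
  have cm: "tail_law M X \<alpha> c = uniform_measure ?D {c<..}" using p by (simp add: tail_law_def)
  have "cdf (tail_law M X \<alpha> c) x = measure ?D ({c<..} \<inter> {..x}) / measure ?D {c<..}"
    unfolding cdf_def cm by (rule measure_uniform_measure) (use p in \<open>simp_all add: emeasure_tail_event\<close>)
  also have "measure ?D {c<..} = ?p" using emeasure_tail_event p by (simp add: measure_def)
  also have "measure ?D ({c<..} \<inter> {..x}) = measure M {\<omega>\<in>space M. c < X \<omega> \<and> X \<omega> \<le> x}"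
  proof -
    have "measure ?D ({c<..} \<inter> {..x}) = measure M (X -` ({c<..} \<inter> {..x}) \<inter> space M)"
      by (rule measure_distr) auto
    also have "X -` ({c<..} \<inter> {..x}) \<inter> space M = {\<omega>\<in>space M. c < X \<omega> \<and> X \<omega> \<le> x}"
      by auto
    finally show ?thesis .
  qed
  also have "measure M {\<omega>\<in>space M. c < X \<omega> \<and> X \<omega> \<le> x}
      = (if x \<le> c then 0 else ?p - measure M {\<omega>\<in>space M. X \<omega> > x})"
  proof (cases "x \<le> c")
    case True
    hence e: "{\<omega>\<in>space M. c < X \<omega> \<and> X \<omega> \<le> x} = {}" by auto
    show ?thesis using True by (simp only: e measure_empty if_True)
  next
    case False
    have "{\<omega>\<in>space M. c < X \<omega> \<and> X \<omega> \<le> x}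
        = {\<omega>\<in>space M. X \<omega> > c} - {\<omega>\<in>space M. X \<omega> > x}" by auto
    moreover have "measure M ({\<omega>\<in>space M. X \<omega> > c} - {\<omega>\<in>space M. X \<omega> > x})
        = ?p - measure M {\<omega>\<in>space M. X \<omega> > x}"
      by (rule finite_measure_Diff) (use False in auto)
    ultimately show ?thesis using False by simp
  qed
  finally show ?thesis using p by (simp add: diff_divide_distrib)
qed

lemma integral_tail_law:
  assumes p: "measure M {\<omega>\<in>space M. X \<omega> > c} > 0" and h[measurable]: "h \<in> borel_measurable borel"
  shows "integral\<^sup>L (tail_law M X \<alpha> c) h
    = (\<integral>\<omega>. h (X \<omega>) * indicator {\<omega>\<in>space M. X \<omega> > c} \<omega> \<partial>M) / measure M {\<omega>\<in>space M. X \<omega> > c}"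
proof -
  let ?D = "distr M borel X"
  let ?p = "measure M {\<omega>\<in>space M. X \<omega> > c}"
  have one: "1 / ennreal ?p = ennreal (1 / ?p)" using p divide_ennreal[of 1 ?p] by simp
  have dens: "(\<lambda>y. indicator {c<..} y / emeasure ?D {c<..}) = (\<lambda>y. ennreal (indicator {c<..} y / ?p))"
    using p one by (auto simp: emeasure_tail_event fun_eq_iff indicator_def)
  have "integral\<^sup>L (tail_law M X \<alpha> c) h = integral\<^sup>L (density ?D (\<lambda>y. ennreal (indicator {c<..} y / ?p))) h"
    using p unfolding tail_law_def uniform_measure_def dens by simp
  also have "\<dots> = integral\<^sup>L ?D (\<lambda>y. (indicator {c<..} y / ?p) *\<^sub>R h y)"
    by (rule integral_density) (use p in auto)
  also have "\<dots> = (\<integral>\<omega>. (indicator {c<..} (X \<omega>) / ?p) *\<^sub>R h (X \<omega>) \<partial>M)"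
    by (rule integral_distr) auto
  also have "\<dots> = (\<integral>\<omega>. (1 / ?p) * (h (X \<omega>) * indicator {\<omega>\<in>space M. X \<omega> > c} \<omega>) \<partial>M)"
    by (rule Bochner_Integration.integral_cong) (auto simp: indicator_def)
  also have "\<dots> = (\<integral>\<omega>. h (X \<omega>) * indicator {\<omega>\<in>space M. X \<omega> > c} \<omega> \<partial>M) / ?p"
    by simp
  finally show ?thesis .
qed

end

lemma (in finite_measure) nn_integral_eq_integral_bounded:
  assumes [measurable]: "f \<in> borel_measurable M" and "\<And>x. x \<in> space M \<Longrightarrow> 0 \<le> f x \<and> f x \<le> B"
  shows "(\<integral>\<^sup>+ x. ennreal (f x) \<partial>M) = ennreal (integral\<^sup>L M f)"
  using assms by (intro nn_integral_eq_integral integrable_const_bound[where B = B]) (auto intro!: AE_I2)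

lemma nn_integral_ray_measure_pareto:
  fixes f :: "ereal^'p \<Rightarrow> real" and v :: "real^'p"
  assumes \<alpha>: "\<alpha> > 0" and c: "c > 0" and v_nonneg: "\<forall>i. 0 \<le> v $ i"
    and [measurable]: "f \<in> borel_measurable borel" and f_nonneg: "\<And>x. 0 \<le> f x"
    and f_bounded: "\<And>x. x \<in> cone \<Longrightarrow> f x \<le> B"
    and f_vanish: "\<And>t. 0 \<le> t \<Longrightarrow> t \<le> c \<Longrightarrow> f (emb (t *\<^sub>R v)) = 0"
  shows "(\<integral>\<^sup>+ x. ennreal (f x) \<partial>ray_measure \<alpha> v)
    = ennreal (c powr (-\<alpha>) * integral\<^sup>L (pareto \<alpha> c) (\<lambda>y. f (emb (max y 0 *\<^sub>R v))))"
proof -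
  define d where "d = c powr (-\<alpha>)"
  have d: "d > 0" using c by (simp add: d_def)
  define g where "g u = f (emb (max (c * u powr (-1/\<alpha>)) 0 *\<^sub>R v))" for u :: real
  have [measurable]: "g \<in> borel_measurable borel" unfolding g_def by measurable
  have g_bounds: "0 \<le> g u \<and> g u \<le> B" for u
    using f_nonneg f_bounded v_nonneg by (auto simp: g_def cone_def)
  have ray_scaled: "ray \<alpha> v (d * u) = emb (max (c * u powr (-1/\<alpha>)) 0 *\<^sub>R v)" if "u > 0" for u
    using ray_powr_mult[OF \<alpha> c that] that c by (simp add: d_def)
  have "u powr (-1/\<alpha>) \<le> 1" if "u > 1" for u
    using less_powr_inverse_iff[of u 1 \<alpha>] that \<alpha> by simp
  hence "g u = 0" if "u > 1" for u
    using that c by (auto simp: g_def intro!: f_vanish mult_left_le)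
  hence integrand: "ennreal (f (ray \<alpha> v (0 + d * u))) * indicator {0<..} (0 + d * u)
      = ennreal (g u) * indicator {0<..1} u" for u
    using d ray_scaled[of u] by (cases "u > 0") (auto simp: indicator_def zero_less_mult_iff g_def)
  let ?U = "restrict_space lborel {0<..(1::real)}"
  interpret U: prob_space ?U by (rule prob_space_unit_interval)
  have "(\<integral>\<^sup>+ x. ennreal (f x) \<partial>ray_measure \<alpha> v)
      = (\<integral>\<^sup>+ s. ennreal (f (ray \<alpha> v s)) * indicator {0<..} s \<partial>lborel)"
    by (rule nn_integral_ray_measure) measurable
  also have "\<dots> = ennreal \<bar>d\<bar> * (\<integral>\<^sup>+ u. ennreal (f (ray \<alpha> v (0 + d * u))) * indicator {0<..} (0 + d * u) \<partial>lborel)"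
    by (rule nn_integral_real_affine) (use d in auto)
  also have "\<dots> = ennreal \<bar>d\<bar> * (\<integral>\<^sup>+ u. ennreal (g u) * indicator {0<..1} u \<partial>lborel)"
    by (simp only: integrand)
  also have "(\<integral>\<^sup>+ u. ennreal (g u) * indicator {0<..1} u \<partial>lborel) = ennreal (integral\<^sup>L ?U g)"
    by (subst nn_integral_restrict_space[symmetric], simp, rule U.nn_integral_eq_integral_bounded)
       (use g_bounds in \<open>auto intro: measurable_restrict_space1\<close>)
  also have "integral\<^sup>L ?U g = integral\<^sup>L (pareto \<alpha> c) (\<lambda>y. f (emb (max y 0 *\<^sub>R v)))"
    unfolding pareto_def g_def by (rule integral_distr[symmetric, OF pareto_map_measurable]) measurable
  finally show ?thesis
    using d by (simp add: d_def ennreal_mult' integral_nonneg_AE f_nonneg)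
qed

section \<open>A regularly varying random variable\<close>

lemma (in finite_measure) integral_split_bounded:
  assumes [measurable]: "F \<in> borel_measurable M" "S \<in> sets M" "T \<in> sets M"
    and F_bounds: "\<And>\<omega>. \<omega> \<in> space M \<Longrightarrow> 0 \<le> F \<omega> \<and> F \<omega> \<le> B"
    and F_vanish: "\<And>\<omega>. \<omega> \<in> space M \<Longrightarrow> \<omega> \<notin> S \<Longrightarrow> \<omega> \<notin> T \<Longrightarrow> F \<omega> = 0"
  shows "(\<integral>\<omega>. F \<omega> * indicator S \<omega> \<partial>M) \<le> integral\<^sup>L M F"
    and "integral\<^sup>L M F \<le> (\<integral>\<omega>. F \<omega> * indicator S \<omega> \<partial>M) + B * measure M T"
proof -
  have B: "0 \<le> B" if "\<omega> \<in> space M" for \<omega> using F_bounds[OF that] by linarith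
  have int_F: "integrable M F"
    by (rule integrable_const_bound[where B=B]) (use F_bounds in \<open>auto intro!: AE_I2\<close>)
  have int_FS: "integrable M (\<lambda>\<omega>. F \<omega> * indicator S \<omega>)"
    using int_F by (rule integrable_real_mult_indicator[rotated]) simp
  have int_T: "integrable M (\<lambda>\<omega>. B * indicator T \<omega>)"
    by (intro integrable_mult_right integrable_real_indicator) (simp_all add: less_top[symmetric])
  show "(\<integral>\<omega>. F \<omega> * indicator S \<omega> \<partial>M) \<le> integral\<^sup>L M F"
    by (rule integral_mono[OF int_FS int_F]) (use F_bounds in \<open>auto simp: indicator_def\<close>)
  have "integral\<^sup>L M F \<le> (\<integral>\<omega>. F \<omega> * indicator S \<omega> + B * indicator T \<omega> \<partial>M)"
  proof (rule integral_mono[OF int_F Bochner_Integration.integrable_add[OF int_FS int_T]])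
    fix \<omega> assume \<omega>: "\<omega> \<in> space M"
    show "F \<omega> \<le> F \<omega> * indicator S \<omega> + B * indicator T \<omega>"
      using F_bounds[OF \<omega>] F_vanish[OF \<omega>] B[OF \<omega>]
      by (cases "\<omega> \<in> S"; cases "\<omega> \<in> T") simp_all
  qed
  thus "integral\<^sup>L M F \<le> (\<integral>\<omega>. F \<omega> * indicator S \<omega> \<partial>M) + B * measure M T"
    using int_FS int_T by simp
qed

context
  fixes M :: "'a measure" and Z :: "'a \<Rightarrow> real" and \<alpha> :: real and b :: "nat \<Rightarrow> real"
  assumes prob: "prob_space M" and Z_measurable[measurable]: "Z \<in> borel_measurable M"
    and \<alpha>: "\<alpha> > 0" and b_pos: "\<forall>n. b n > 0"
    and tail_limit: "\<forall>x>0. ((\<lambda>n. real n * measure M {\<omega>\<in>space M. Z \<omega> / b n > x})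
                        \<longlongrightarrow> x powr (-\<alpha>)) sequentially"
begin

interpretation prob_space M by (rule prob)

lemma tail_limit_scaled:
  assumes "x > 0"
  shows "((\<lambda>n. real n * prob {\<omega>\<in>space M. Z \<omega> > x * b n}) \<longlongrightarrow> x powr (-\<alpha>)) sequentially"
proof -
  have eq: "{\<omega>\<in>space M. Z \<omega> / b n > x} = {\<omega>\<in>space M. Z \<omega> > x * b n}" for n
    using b_pos[rule_format, of n] by (auto simp: field_simps)
  have "((\<lambda>n. real n * prob {\<omega>\<in>space M. Z \<omega> / b n > x}) \<longlongrightarrow> x powr (-\<alpha>)) sequentially"
    using tail_limit assms by blast
  thus ?thesis by (simp only: eq)
qed

lemma tail_prob_at_b_tendsto_0: "((\<lambda>n. prob {\<omega>\<in>space M. Z \<omega> > b n}) \<longlongrightarrow> 0) sequentially"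
proof -
  have "((\<lambda>n. (real n * prob {\<omega>\<in>space M. Z \<omega> > 1 * b n}) * (1 / real n)) \<longlongrightarrow> 1 * 0) sequentially"
    using tail_limit_scaled[of 1] by (intro tendsto_mult lim_const_over_n) auto
  moreover have "eventually (\<lambda>n. (real n * prob {\<omega>\<in>space M. Z \<omega> > 1 * b n}) * (1 / real n)
      = prob {\<omega>\<in>space M. Z \<omega> > b n}) sequentially"
    using eventually_gt_at_top[of 0] by eventually_elim simp
  ultimately show ?thesis by (simp add: tendsto_cong)
qed

lemma tail_prob_pos:
  assumes K: "K > 0"
  shows "prob {\<omega>\<in>space M. Z \<omega> > K} > 0"
proof (rule ccontr)
  let ?q = "\<lambda>y. prob {\<omega>\<in>space M. Z \<omega> > y}"
  have q_antimono: "y1 \<le> y2 \<Longrightarrow> ?q y2 \<le> ?q y1" for y1 y2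
    by (intro finite_measure_mono) auto
  assume "\<not> ?q K > 0"
  hence qK: "?q K = 0" using measure_nonneg[of M "{\<omega>\<in>space M. Z \<omega> > K}"] by linarith
  have "?q y = 0" if y: "y > 0" for y
  proof (cases "y \<ge> K")
    case True thus ?thesis using q_antimono[OF True] qK measure_nonneg[of M "{\<omega>\<in>space M. Z \<omega> > y}"] by linarith
  next
    case False
    have x: "K / y > 0" using K y by simp
    have "eventually (\<lambda>n. real n * ?q (K / y * b n) > 0) sequentially"
      using order_tendstoD(1)[OF tail_limit_scaled[OF x], of 0] x K y by simp
    hence "eventually (\<lambda>n. ?q y \<le> ?q (b n)) sequentially"
    proof eventually_elim
      case (elim n)
      hence "?q (K / y * b n) > 0" by (simp add: zero_less_mult_iff)
      hence "K / y * b n < K" using q_antimono[of K "K / y * b n"] qK by (cases "K / y * b n < K") auto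
      hence "b n < y" using y K by (simp add: field_simps)
      thus ?case by (intro q_antimono) simp
    qed
    hence "?q y \<le> 0" using tail_prob_at_b_tendsto_0 by (intro tendsto_lowerbound) auto
    thus ?thesis using measure_nonneg[of M "{\<omega>\<in>space M. Z \<omega> > y}"] by linarith
  qed
  hence "(\<lambda>n. real n * ?q (1 * b n)) = (\<lambda>n. 0)" using b_pos by (auto simp: fun_eq_iff)
  hence "((\<lambda>n. 0::real) \<longlongrightarrow> 1) sequentially" using tail_limit_scaled[of 1] by simp
  thus False using LIMSEQ_unique[OF tendsto_const] by fastforce
qed

lemma filterlim_b_at_top: "filterlim b at_top sequentially"
  unfolding filterlim_at_top
proof
  fix K :: real
  show "eventually (\<lambda>n. K \<le> b n) sequentially"
  proof (cases "K > 0")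
    case False
    have "K \<le> b n" for n using b_pos[rule_format, of n] False by linarith
    thus ?thesis by simp
  next
    case True
    let ?q = "\<lambda>y. prob {\<omega>\<in>space M. Z \<omega> > y}"
    have "eventually (\<lambda>n. real n * ?q (1 * b n) < 2) sequentially"
      using order_tendstoD(2)[OF tail_limit_scaled[of 1], of 2] by simp
    moreover have "filterlim (\<lambda>n. real n * ?q K) at_top sequentially"
      by (rule filterlim_at_top_mult_tendsto_pos[OF tendsto_const tail_prob_pos[OF True]
            filterlim_real_sequentially])
    hence "eventually (\<lambda>n. real n * ?q K > 2) sequentially"
      by (simp add: filterlim_at_top_dense)
    ultimately show ?thesis
    proof eventually_elim
      case (elim n)
      show "K \<le> b n"
      proof (rule ccontr)
        assume "\<not> K \<le> b n"
        hence "?q K \<le> ?q (b n)" by (intro finite_measure_mono) auto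
        hence "real n * ?q K \<le> real n * ?q (b n)" by (simp add: mult_left_mono)
        thus False using elim by simp
      qed
    qed
  qed
qed

lemma eventually_tail_prob_pos:
  assumes "c > 0"
  shows "eventually (\<lambda>n. prob {\<omega>\<in>space M. Z \<omega> / b n > c} > 0) sequentially"
proof -
  have "((\<lambda>n. real n * prob {\<omega>\<in>space M. Z \<omega> / b n > c}) \<longlongrightarrow> c powr (-\<alpha>)) sequentially"
    using tail_limit assms by blast
  moreover have "c powr (-\<alpha>) > 0" using assms by simp
  ultimately have "eventually (\<lambda>n. real n * prob {\<omega>\<in>space M. Z \<omega> / b n > c} > 0) sequentially"
    by (rule order_tendstoD(1))
  thus ?thesis by eventually_elim (simp add: zero_less_mult_iff)
qed

lemma weak_conv_tail_law:
  assumes c: "c > 0"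
  shows "weak_conv_m (\<lambda>n. tail_law M (\<lambda>\<omega>. Z \<omega> / b n) \<alpha> c) (pareto \<alpha> c)"
  unfolding weak_conv_m_def weak_conv_def
proof (intro allI impI)
  fix x :: real
  let ?p = "\<lambda>x n. prob {\<omega>\<in>space M. Z \<omega> / b n > x}"
  let ?\<mu> = "\<lambda>n. tail_law M (\<lambda>\<omega>. Z \<omega> / b n) \<alpha> c"
  show "(\<lambda>n. cdf (?\<mu> n) x) \<longlonglongrightarrow> cdf (pareto \<alpha> c) x"
  proof (cases "x \<le> c")
    case True
    have "cdf (?\<mu> n) x = 0" for n
    proof (cases "?p c n > 0")
      case False
      thus ?thesis using True c \<alpha> by (simp add: tail_law_def cdf_pareto)
    qed (use True in \<open>simp add: cdf_tail_law[OF prob]\<close>)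
    thus ?thesis using True c \<alpha> by (simp add: cdf_pareto)
  next
    case False
    hence x: "x > 0" "x > c" using c by auto
    have "((\<lambda>n. 1 - (real n * ?p x n) / (real n * ?p c n)) \<longlongrightarrow> 1 - x powr (-\<alpha>) / c powr (-\<alpha>))
        sequentially"
      using c x tail_limit by (intro tendsto_intros) auto
    moreover have "eventually (\<lambda>n. 1 - (real n * ?p x n) / (real n * ?p c n) = cdf (?\<mu> n) x)
        sequentially"
      using eventually_tail_prob_pos[OF c] eventually_gt_at_top[of 0]
      by eventually_elim (use x in \<open>simp add: cdf_tail_law[OF prob]\<close>)
    moreover have "cdf (pareto \<alpha> c) x = 1 - x powr (-\<alpha>) / c powr (-\<alpha>)"
      using x c \<alpha> by (simp add: cdf_pareto powr_divide)
    ultimately show ?thesis by (simp add: tendsto_cong)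
  qed
qed

lemma tendsto_tail_integral:
  assumes c: "c > 0" and [measurable]: "\<And>n. h n \<in> borel_measurable borel" "g \<in> borel_measurable borel"
    and h_bounded: "\<And>n y. \<bar>h n y\<bar> \<le> B"
    and h_conv: "\<And>yn y. y > 0 \<Longrightarrow> yn \<longlonglongrightarrow> y \<Longrightarrow> (\<lambda>n. h n (yn n)) \<longlonglongrightarrow> g y"
  shows "(\<lambda>n. real n * (\<integral>\<omega>. h n (Z \<omega> / b n) * indicator {\<omega>\<in>space M. Z \<omega> / b n > c} \<omega> \<partial>M))
           \<longlonglongrightarrow> c powr (-\<alpha>) * integral\<^sup>L (pareto \<alpha> c) g"
proof -
  let ?p = "\<lambda>n. prob {\<omega>\<in>space M. Z \<omega> / b n > c}"
  let ?\<mu> = "\<lambda>n. tail_law M (\<lambda>\<omega>. Z \<omega> / b n) \<alpha> c"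
  have "(\<lambda>n. integral\<^sup>L (?\<mu> n) (h n)) \<longlonglongrightarrow> integral\<^sup>L (pareto \<alpha> c) g"
    by (rule integral_tendsto_of_weak_conv[OF real_distribution_tail_law[OF prob]
          real_distribution_pareto weak_conv_tail_law[OF c] _ _ h_bounded AE_pareto_pos[OF c] h_conv])
       simp_all
  hence "(\<lambda>n. (real n * ?p n) * integral\<^sup>L (?\<mu> n) (h n)) \<longlonglongrightarrow> c powr (-\<alpha>) * integral\<^sup>L (pareto \<alpha> c) g"
    using tail_limit c by (intro tendsto_mult) auto
  moreover have "eventually (\<lambda>n. (real n * ?p n) * integral\<^sup>L (?\<mu> n) (h n)
      = real n * (\<integral>\<omega>. h n (Z \<omega> / b n) * indicator {\<omega>\<in>space M. Z \<omega> / b n > c} \<omega> \<partial>M)) sequentially"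
    using eventually_tail_prob_pos[OF c] by eventually_elim (simp add: integral_tail_law[OF prob])
  ultimately show ?thesis by (simp add: tendsto_cong)
qed

lemma tendsto_expectation_of_tail:
  assumes c: "c > 0" and [measurable]: "\<And>n. \<phi> n \<in> borel_measurable borel" "g \<in> borel_measurable borel"
    and lower_tail: "((\<lambda>n. real n * prob {\<omega>\<in>space M. Z \<omega> \<le> exp (- c * b n)}) \<longlongrightarrow> 0) sequentially"
    and \<phi>_bounds: "\<And>n z. 0 \<le> \<phi> n z \<and> \<phi> n z \<le> B"
    and \<phi>_vanish: "eventually (\<lambda>n. \<forall>z. exp (- c * b n) < z \<longrightarrow> z \<le> c * b n \<longrightarrow> \<phi> n z = 0)
                     sequentially"
    and \<phi>_conv: "\<And>yn y. y > 0 \<Longrightarrow> yn \<longlonglongrightarrow> y \<Longrightarrow> (\<lambda>n. \<phi> n (b n * yn n)) \<longlonglongrightarrow> g y"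
  shows "(\<lambda>n. real n * expectation (\<lambda>\<omega>. \<phi> n (Z \<omega>))) \<longlonglongrightarrow> c powr (-\<alpha>) * integral\<^sup>L (pareto \<alpha> c) g"
proof -
  define S where "S n = {\<omega>\<in>space M. Z \<omega> / b n > c}" for n
  define T where "T n = {\<omega>\<in>space M. Z \<omega> \<le> exp (- c * b n)}" for n
  define J where "J n = (\<integral>\<omega>. \<phi> n (Z \<omega>) * indicator (S n) \<omega> \<partial>M)" for n
  have ST_events[measurable]: "S n \<in> sets M" "T n \<in> sets M" for n unfolding S_def T_def by measurable
  have "\<phi> n (b n * (Z \<omega> / b n)) = \<phi> n (Z \<omega>)" for n \<omega> using b_pos[rule_format, of n] by simp
  hence lim_J: "(\<lambda>n. real n * J n) \<longlonglongrightarrow> c powr (-\<alpha>) * integral\<^sup>L (pareto \<alpha> c) g"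
    using tendsto_tail_integral[OF c, of "\<lambda>n y. \<phi> n (b n * y)" g B] \<phi>_bounds \<phi>_conv
    by (simp add: J_def S_def)
  have bounds: "eventually (\<lambda>n. J n \<le> expectation (\<lambda>\<omega>. \<phi> n (Z \<omega>))
      \<and> expectation (\<lambda>\<omega>. \<phi> n (Z \<omega>)) \<le> J n + B * prob (T n)) sequentially"
    using \<phi>_vanish unfolding J_def
  proof eventually_elim
    case (elim n)
    have "\<phi> n (Z \<omega>) = 0" if "\<omega> \<notin> S n" "\<omega> \<notin> T n" "\<omega> \<in> space M" for \<omega>
    proof -
      have "Z \<omega> \<le> c * b n" using that b_pos[rule_format, of n] by (simp add: S_def field_simps)
      moreover have "exp (- c * b n) < Z \<omega>" using that by (simp add: T_def)
      ultimately show ?thesis using elim by blast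
    qed
    thus ?case
      by (intro conjI integral_split_bounded[where B = B, OF _ ST_events[of n]]) (simp_all add: \<phi>_bounds)
  qed
  have "eventually (\<lambda>n. real n * J n \<le> real n * expectation (\<lambda>\<omega>. \<phi> n (Z \<omega>))) sequentially"
    using bounds by eventually_elim (simp add: mult_left_mono)
  moreover have "eventually (\<lambda>n. real n * expectation (\<lambda>\<omega>. \<phi> n (Z \<omega>))
      \<le> real n * J n + B * (real n * prob (T n))) sequentially"
    using bounds
  proof eventually_elim
    case (elim n)
    hence "real n * expectation (\<lambda>\<omega>. \<phi> n (Z \<omega>)) \<le> real n * (J n + B * prob (T n))"
      by (simp add: mult_left_mono)
    thus ?case by (simp add: algebra_simps)
  qed
  moreover have "(\<lambda>n. real n * J n + B * (real n * prob (T n)))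
      \<longlonglongrightarrow> c powr (-\<alpha>) * integral\<^sup>L (pareto \<alpha> c) g"
    using tendsto_add[OF lim_J tendsto_mult[OF tendsto_const lower_tail, of B]] by (simp add: T_def)
  ultimately show ?thesis by (rule tendsto_sandwich[OF _ _ lim_J])
qed

end

section \<open>The rescaled vector \<open>a \<circ> Z\<close>\<close>

lemma circ_vec_measurable[measurable]: "circ_vec a \<in> borel_measurable borel"
  unfolding circ_vec_def by (rule vec_lambda_measurable) measurable

lemma emb_scaled_circ_vec_in_cone: "b > 0 \<Longrightarrow> emb ((1 / b) *\<^sub>R circ_vec a z) \<in> cone"
  using tfun_pos by (auto simp: cone_def circ_vec_def less_imp_le)

lemma tendsto_scaled_circ_vec:
  fixes a :: "real^'p" and b :: "nat \<Rightarrow> real"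
  assumes b: "filterlim b at_top sequentially" and b_pos: "\<forall>n. b n > 0"
    and yn: "yn \<longlonglongrightarrow> y" and y: "y > 0"
  shows "(\<lambda>n. (1 / b n) *\<^sub>R circ_vec a (b n * yn n)) \<longlonglongrightarrow> y *\<^sub>R (\<chi> i. max (a $ i) 0)"
proof (rule vec_tendstoI)
  fix i
  let ?C = "\<bar>a $ i\<bar> + ln 2" and ?t = "\<lambda>n. tfun (a $ i * tinv (b n * yn n))"
  have "eventually (\<lambda>n. y / 2 < yn n \<and> 2 / y \<le> b n) sequentially"
    using order_tendstoD(1)[OF yn, of "y/2"] y b by (auto simp: filterlim_at_top eventually_conj)
  hence "eventually (\<lambda>n. 1 \<le> b n * yn n) sequentially"
  proof eventually_elim
    case (elim n)
    have "(2 / y) * (y / 2) \<le> b n * yn n" using elim y b_pos[rule_format, of n] by (intro mult_mono) auto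
    thus ?case using y by simp
  qed
  hence "eventually (\<lambda>n. norm (?t n / b n - max (a $ i) 0 * yn n) \<le> ?C / b n) sequentially"
  proof eventually_elim
    case (elim n)
    have bn: "b n > 0" using b_pos by simp
    have "?t n / b n - max (a $ i) 0 * yn n = (?t n - max (a $ i) 0 * (b n * yn n)) / b n"
      using bn by (simp add: field_simps)
    thus ?case using abs_tfun_mult_tinv_le[OF elim] bn by (simp add: abs_divide divide_right_mono)
  qed
  moreover have "((\<lambda>n. ?C / b n) \<longlongrightarrow> 0) sequentially"
    by (rule tendsto_divide_0[OF tendsto_const filterlim_at_top_imp_at_infinity[OF b]])
  ultimately have "((\<lambda>n. ?t n / b n - max (a $ i) 0 * yn n) \<longlongrightarrow> 0) sequentially"
    by (rule Lim_null_comparison)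
  hence "((\<lambda>n. (?t n / b n - max (a $ i) 0 * yn n) + max (a $ i) 0 * yn n)
      \<longlongrightarrow> 0 + max (a $ i) 0 * y) sequentially"
    by (intro tendsto_add tendsto_mult tendsto_const yn)
  thus "((\<lambda>n. ((1 / b n) *\<^sub>R circ_vec a (b n * yn n)) $ i) \<longlongrightarrow> (y *\<^sub>R (\<chi> i. max (a $ i) 0)) $ i)
      sequentially" by (simp add: circ_vec_def mult.commute)
qed

lemma eventually_vanish_scaled_circ_vec:
  fixes a :: "real^'p" and b :: "nat \<Rightarrow> real"
  assumes b: "filterlim b at_top sequentially" and b_pos: "\<forall>n. b n > 0"
    and c: "c > 0" and k: "k > 0" and small: "\<And>i. \<bar>a $ i\<bar> * (c + k) < \<epsilon> / 2"
    and f_vanish: "\<forall>x\<in>cone. (\<forall>i. x $ i < ereal \<epsilon>) \<longrightarrow> f x = 0"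
  shows "eventually (\<lambda>n. \<forall>z. exp (- k * b n) < z \<longrightarrow> z \<le> c * b n \<longrightarrow>
           f (emb ((1 / b n) *\<^sub>R circ_vec a z)) = 0) sequentially"
proof -
  have "0 \<le> \<bar>a $ i\<bar> * (c + k)" for i using c k by simp
  hence "\<epsilon> > 0" using small[of undefined] by (meson le_less_trans half_gt_zero_iff)
  have "((\<lambda>n. ln 2 / b n) \<longlongrightarrow> 0) sequentially"
    by (rule tendsto_divide_0[OF tendsto_const filterlim_at_top_imp_at_infinity[OF b]])
  hence "eventually (\<lambda>n. ln 2 / b n < \<epsilon> / 2) sequentially"
    using \<open>\<epsilon> > 0\<close> by (intro order_tendstoD(2)) auto
  thus ?thesis
  proof eventually_elim
    case (elim n)
    show ?case
    proof (intro allI impI)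
      fix z assume lo: "exp (- k * b n) < z" and hi: "z \<le> c * b n"
      have bn: "b n > 0" using b_pos by simp
      have "emb ((1 / b n) *\<^sub>R circ_vec a z) $ i < ereal \<epsilon>" for i
      proof -
        have "tfun (a $ i * tinv z) / b n \<le> (\<bar>a $ i\<bar> * (c + k) * b n + ln 2) / b n"
          using tfun_mult_tinv_le[OF lo hi bn k c] bn by (simp add: divide_right_mono)
        also have "\<dots> = \<bar>a $ i\<bar> * (c + k) + ln 2 / b n" using bn by (simp add: field_simps)
        also have "\<dots> < \<epsilon>" using small[of i] elim by linarith
        finally show ?thesis by (simp add: circ_vec_def)
      qed
      thus "f (emb ((1 / b n) *\<^sub>R circ_vec a z)) = 0"
        using f_vanish emb_scaled_circ_vec_in_cone[OF bn] by blast
    qed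
  qed
qed

lemma tendsto_comp_scaled_circ_vec:
  fixes a :: "real^'p" and b :: "nat \<Rightarrow> real"
  assumes f: "continuous_on cone f" and b: "filterlim b at_top sequentially"
    and b_pos: "\<forall>n. b n > 0" and yn: "yn \<longlonglongrightarrow> y" and y: "y > 0"
  shows "(\<lambda>n. f (emb ((1 / b n) *\<^sub>R circ_vec a (b n * yn n))))
           \<longlonglongrightarrow> f (emb (y *\<^sub>R (\<chi> i. max (a $ i) 0)))"
proof (rule continuous_on_tendsto_compose[OF f])
  show "(\<lambda>n. emb ((1 / b n) *\<^sub>R circ_vec a (b n * yn n))) \<longlonglongrightarrow> emb (y *\<^sub>R (\<chi> i. max (a $ i) 0))"
    by (intro tendsto_emb tendsto_scaled_circ_vec[OF b b_pos yn y])
  show "emb (y *\<^sub>R (\<chi> i. max (a $ i) 0)) \<in> cone" using y by (simp add: cone_def)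
  show "eventually (\<lambda>n. emb ((1 / b n) *\<^sub>R circ_vec a (b n * yn n)) \<in> cone) sequentially"
    using b_pos by (intro always_eventually allI emb_scaled_circ_vec_in_cone) simp
qed

section \<open>Regular variation of \<open>a \<circ> Z\<close>\<close>

lemma exists_small_scale:
  fixes a :: "real^'p"
  assumes "\<epsilon> > 0"
  obtains c where "c > 0" "\<And>i. \<bar>a $ i\<bar> * (c + c) < \<epsilon> / 2" "\<And>i. c * \<bar>a $ i\<bar> < \<epsilon>"
proof
  define A where "A = (\<Sum>i\<in>UNIV. \<bar>a $ i\<bar>)"
  have a_le: "\<bar>a $ i\<bar> \<le> A" for i unfolding A_def by (rule member_le_sum) auto
  hence A: "A \<ge> 0" by (meson abs_ge_zero order_trans)
  define d where "d = \<epsilon> / 4 / (A + 1)"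
  show "d / 2 > 0" using assms A by (simp add: d_def)
  fix i
  have "\<bar>a $ i\<bar> * (d / 2 + d / 2) = \<bar>a $ i\<bar> * d" by simp
  also have "\<dots> \<le> (A + 1) * d"
    using a_le[of i] assms A by (intro mult_right_mono) (auto simp: d_def)
  also have "(A + 1) * d = \<epsilon> / 4"
    using nonzero_mult_div_cancel_left[of "A + 1" "\<epsilon> / 4"] A by (simp add: d_def)
  finally show *: "\<bar>a $ i\<bar> * (d / 2 + d / 2) < \<epsilon> / 2" using assms by simp
  have "0 \<le> d / 2 * \<bar>a $ i\<bar>" using assms A by (simp add: d_def)
  thus "d / 2 * \<bar>a $ i\<bar> < \<epsilon>" using * by (simp add: algebra_simps)
qed

lemma vague_conv_circ_vec:
  fixes M :: "'a measure" and Z :: "'a \<Rightarrow> real" and a :: "real ^ 'p"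
    and \<alpha> :: real and b :: "nat \<Rightarrow> real"
  assumes prob: "prob_space M" and Z: "Z \<in> borel_measurable M" and \<alpha>: "\<alpha> > 0"
    and b_pos: "\<forall>n. b n > 0"
    and tail_limit: "\<forall>x>0. ((\<lambda>n. real n * measure M {\<omega>\<in>space M. Z \<omega> / b n > x})
                        \<longlongrightarrow> x powr (-\<alpha>)) sequentially"
    and lower_tail: "\<forall>k>0. ((\<lambda>n. real n * measure M {\<omega>\<in>space M. Z \<omega> \<le> exp (- k * b n)})
                        \<longlongrightarrow> 0) sequentially"
  shows "vague_conv M (\<lambda>\<omega>. circ_vec a (Z \<omega>)) b (ray_measure \<alpha> (\<chi> i. max (a $ i) 0))"
  unfolding vague_conv_def
proof (intro allI impI)
  fix f :: "ereal^'p \<Rightarrow> real" assume f: "testfun f"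
  interpret prob_space M by (rule prob)
  define v :: "real^'p" where "v = (\<chi> i. max (a $ i) 0)"
  have v_nonneg: "\<forall>i. 0 \<le> v $ i" by (simp add: v_def)
  have b: "filterlim b at_top sequentially" by (rule filterlim_b_at_top[OF prob Z \<alpha> b_pos tail_limit])
  obtain \<epsilon> where "\<epsilon> > 0" and f_vanish: "\<forall>x\<in>cone. (\<forall>i. x $ i < ereal \<epsilon>) \<longrightarrow> f x = 0"
    using f unfolding testfun_def by blast
  have f_nonneg: "\<And>x. 0 \<le> f x" and f_cont: "continuous_on cone f"
    and [measurable]: "f \<in> borel_measurable borel"
    using f unfolding testfun_def by auto
  obtain B where f_bounded: "\<And>x. x \<in> cone \<Longrightarrow> f x \<le> B" using testfun_bounded[OF f] by blast
  obtain c where c: "c > 0" and small: "\<And>i. \<bar>a $ i\<bar> * (c + c) < \<epsilon> / 2"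
    and c_small: "\<And>i. c * \<bar>a $ i\<bar> < \<epsilon>"
    using exists_small_scale[OF \<open>\<epsilon> > 0\<close>] by blast
  define \<phi> where "\<phi> n z = f (emb ((1 / b n) *\<^sub>R circ_vec a z))" for n z
  define g where "g y = f (emb (max y 0 *\<^sub>R v))" for y
  have \<phi>g_measurable[measurable]: "\<phi> n \<in> borel_measurable borel" "g \<in> borel_measurable borel" for n
    unfolding \<phi>_def g_def by measurable
  have "\<phi> n z \<le> B" for n z
    unfolding \<phi>_def by (rule f_bounded[OF emb_scaled_circ_vec_in_cone]) (use b_pos in simp)
  hence \<phi>_bounds: "0 \<le> \<phi> n z \<and> \<phi> n z \<le> B" for n z using f_nonneg by (simp add: \<phi>_def)
  have \<phi>_conv: "(\<lambda>n. \<phi> n (b n * yn n)) \<longlonglongrightarrow> g y" if "y > 0" "yn \<longlonglongrightarrow> y" for yn y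
    using tendsto_comp_scaled_circ_vec[OF f_cont b b_pos that(2,1)] that by (simp add: \<phi>_def g_def v_def)
  have "(\<lambda>n. real n * expectation (\<lambda>\<omega>. \<phi> n (Z \<omega>)))
      \<longlonglongrightarrow> c powr (-\<alpha>) * integral\<^sup>L (pareto \<alpha> c) g"
    using lower_tail c
    by (intro tendsto_expectation_of_tail[OF prob Z \<alpha> b_pos tail_limit c \<phi>g_measurable _ \<phi>_bounds _ \<phi>_conv])
       (use eventually_vanish_scaled_circ_vec[OF b b_pos c c small f_vanish] in \<open>auto simp: \<phi>_def\<close>)
  moreover have "ennreal (real n) * (\<integral>\<^sup>+ \<omega>. ennreal (\<phi> n (Z \<omega>)) \<partial>M)
      = ennreal (real n * expectation (\<lambda>\<omega>. \<phi> n (Z \<omega>)))" for n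
    using nn_integral_eq_integral_bounded[of "\<lambda>\<omega>. \<phi> n (Z \<omega>)" B] \<phi>_bounds Z
    by (simp add: ennreal_mult integral_nonneg_AE)
  moreover have "(\<integral>\<^sup>+ x. ennreal (f x) \<partial>ray_measure \<alpha> v)
      = ennreal (c powr (-\<alpha>) * integral\<^sup>L (pareto \<alpha> c) g)"
    unfolding g_def
  proof (rule nn_integral_ray_measure_pareto[OF \<alpha> c v_nonneg _ f_nonneg f_bounded])
    fix t assume t: "0 \<le> t" "t \<le> c"
    have "t * v $ i \<le> c * \<bar>a $ i\<bar>" for i using t c by (intro mult_mono) (auto simp: v_def)
    hence "t * v $ i < \<epsilon>" for i using c_small[of i] le_less_trans by blast
    thus "f (emb (t *\<^sub>R v)) = 0" using f_vanish t v_nonneg by (auto simp: cone_def)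
  qed simp
  ultimately show "(\<lambda>n. ennreal (real n) * (\<integral>\<^sup>+ \<omega>. ennreal (f (emb ((1 / b n) *\<^sub>R circ_vec a (Z \<omega>)))) \<partial>M))
      \<longlonglongrightarrow> (\<integral>\<^sup>+ x. ennreal (f x) \<partial>ray_measure \<alpha> (\<chi> i. max (a $ i) 0))"
    by (simp add: \<phi>_def v_def tendsto_ennrealI)
qed

theorem corollaryA2:
  fixes M :: "'a measure" and Z :: "'a \<Rightarrow> real" and a :: "real ^ 'p"
    and \<alpha> :: real and b :: "nat \<Rightarrow> real" and N :: "real ^ 'p \<Rightarrow> real"
  assumes "prob_space M"
    and "Z \<in> borel_measurable M"
    and "\<alpha> > 0"
    and "\<exists>i. a $ i > 0"
    and "\<forall>n. b n > 0"
    and "\<forall>x>0. ((\<lambda>n. real n * measure M {\<omega>\<in>space M. Z \<omega> / b n > x})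
                \<longlongrightarrow> x powr (-\<alpha>)) sequentially"
    and "\<forall>k>0. ((\<lambda>n. real n * measure M {\<omega>\<in>space M. Z \<omega> \<le> exp (- k * b n)})
                \<longlongrightarrow> 0) sequentially"
    and "is_norm N"
  shows "\<exists>\<nu>. RV_plus M (\<lambda>\<omega>. circ_vec a (Z \<omega>)) \<alpha> b \<nu>
           \<and> angular_measure N \<alpha> \<nu>
               (\<lambda>B. ennreal (N (\<chi> i. max (a $ i) 0) powr \<alpha>)
                      * indicator B ((1 / N (\<chi> i. max (a $ i) 0)) *\<^sub>R (\<chi> i. max (a $ i) 0)))"
proof (intro exI conjI)
  let ?v = "(\<chi> i. max (a $ i) 0) :: real^'p"
  have v_nonneg: "\<forall>i. 0 \<le> ?v $ i" by simp
  have v_nonzero: "?v \<noteq> 0"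
  proof -
    obtain i where "a $ i > 0" using assms(4) by blast
    hence "?v $ i \<noteq> 0" by simp
    thus ?thesis by (metis zero_index)
  qed
  show "RV_plus M (\<lambda>\<omega>. circ_vec a (Z \<omega>)) \<alpha> b (ray_measure \<alpha> ?v)"
    unfolding RV_plus_def
    using tfun_pos ray_measure_radon[OF assms(3) v_nonneg v_nonzero]
      vague_conv_circ_vec[OF assms(1-3,5-7)] ray_measure_nonzero[OF assms(3) v_nonneg v_nonzero]
      ray_measure_homogeneous[OF assms(3) v_nonneg v_nonzero]
    by (auto simp: circ_vec_def less_imp_le)
  show "angular_measure N \<alpha> (ray_measure \<alpha> ?v)
      (\<lambda>B. ennreal (N ?v powr \<alpha>) * indicator B ((1 / N ?v) *\<^sub>R ?v))"
    by (rule ray_measure_angular[OF assms(3) v_nonneg v_nonzero assms(8)])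
qed

end
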